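(* Let $\Omega\subset\mathbb{R}^d$ be a bounded Lipschitz domain, $0<\alpha\le1$, $\delta,M_1,M_2>0$, and let $\varrho=\varrho(\Omega,\delta,M_1,M_2,\alpha)>0$ be the radius of guaranteed local injectivity described in the context. Then for every $0<\gamma<\frac{\varrho}{2}$ there exists $\lambda>0$, depending only on $\gamma,d,\Omega,\delta,\alpha,M_1,M_2$ (and not on the maps below), such that for all $y,z\in C^{1,\alpha}(\Omega;\mathbb{R}^d)$ that both satisfy $\det\nabla(\cdot)\ge\delta$, $|\nabla(\cdot)|\le M_1$ on $\Omega$ and $\|\nabla(\cdot)\|_{C^\alpha(\Omega)}\le M_2$, and with $\|y-z\|_{L^\infty}\le\lambda$, we have $$\tilde P^{(\gamma)}_y(0)\subset P_z(0),$$ where $$\tilde P^{(\gamma)}_y(0):=\{x_1\in\Omega:\ \exists x_2\in\Omega\text{ with }\operatorname{dist}(x_2,\partial\Omega)>\gamma,\ y(x_1)=y(x_2),\ |x_1-x_2|>\tfrac{\varrho}{2}+\gamma\},$$ $$P_z(0):=\{x\in\Omega:\ \exists\tilde x\in\Omega\text{ with } z(x)=z(\tilde x)\text{ and }|x-\tilde x|>\tfrac{\varrho}{2}\}.$$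
   Context: The radius $\varrho>0$ depends only on $\Omega,\delta,M_1,M_2,\alpha$ and has the property that every $y\in C^{1,\alpha}(\Omega;\mathbb{R}^d)$ with $\det\nabla y\ge\delta$, $|\nabla y|\le M_1$, $\|\nabla y\|_{C^\alpha(\Omega)}\le M_2$ is injective on $B_\varrho(\bar x)\cap\Omega$ for every $\bar x\in\bar\Omega$, with $\frac12\frac{\delta}{M_1^{d-1}}|x_1-x_2|\le|y(x_1)-y(x_2)|\le M_1\sqrt{1+L^2}|x_1-x_2|$ for $x_1,x_2\in B_\varrho(\bar x)\cap\Omega$ ($L$ bounding the local Lipschitz constants of $\partial\Omega$). Norms are Euclidean. *)

theory Defs
  imports "HOL-Analysis.Analysis"
begin

definition lipschitz_domain :: "(real^'n) set \<Rightarrow> real \<Rightarrow> bool" where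
  "lipschitz_domain \<Omega> L \<longleftrightarrow> open \<Omega> \<and> bounded \<Omega> \<and> connected \<Omega> \<and> \<Omega> \<noteq> {} \<and> 0 \<le> L \<and>
     (\<forall>p\<in>frontier \<Omega>. \<exists>r>0. \<exists>e::real^'n. norm e = 1 \<and>
        (\<exists>g::real^'n \<Rightarrow> real. L-lipschitz_on {v. v \<bullet> e = 0} g \<and>
           ball p r \<inter> \<Omega> = {x \<in> ball p r. x \<bullet> e < g (x - (x \<bullet> e) *\<^sub>R e)}))"

definition grad :: "(real^'n \<Rightarrow> real^'n) \<Rightarrow> real^'n \<Rightarrow> real^'n^'n" where
  "grad y x = matrix (frechet_derivative y (at x))"

text \<open>C^alpha norm of a matrix field on \<Omega>: sup norm plus alpha-Hoelder seminorm (in ereal;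
  Euclidean = Frobenius norm on matrices).\<close>
definition holder_norm :: "(real^'n) set \<Rightarrow> real \<Rightarrow> (real^'n \<Rightarrow> real^'n^'n) \<Rightarrow> ereal" where
  "holder_norm \<Omega> \<alpha> F =
     (SUP x\<in>\<Omega>. ereal (norm (F x))) +
     (SUP p\<in>{(x, x'). x \<in> \<Omega> \<and> x' \<in> \<Omega> \<and> x \<noteq> x'}.
        ereal (norm (F (fst p) - F (snd p)) / (dist (fst p) (snd p)) powr \<alpha>))"

definition C1_alpha :: "(real^'n) set \<Rightarrow> real \<Rightarrow> (real^'n \<Rightarrow> real^'n) \<Rightarrow> bool" where
  "C1_alpha \<Omega> \<alpha> y \<longleftrightarrow> y differentiable_on \<Omega> \<and> holder_norm \<Omega> \<alpha> (grad y) < \<infinity>"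

definition admissible :: "(real^'n) set \<Rightarrow> real \<Rightarrow> real \<Rightarrow> real \<Rightarrow> real \<Rightarrow> (real^'n \<Rightarrow> real^'n) \<Rightarrow> bool" where
  "admissible \<Omega> \<alpha> \<delta> M1 M2 y \<longleftrightarrow> C1_alpha \<Omega> \<alpha> y \<and>
     (\<forall>x\<in>\<Omega>. det (grad y x) \<ge> \<delta> \<and> norm (grad y x) \<le> M1) \<and>
     holder_norm \<Omega> \<alpha> (grad y) \<le> ereal M2"

definition injectivity_radius :: "(real^'n) set \<Rightarrow> real \<Rightarrow> real \<Rightarrow> real \<Rightarrow> real \<Rightarrow> real \<Rightarrow> real \<Rightarrow> bool" where
  "injectivity_radius \<Omega> L \<alpha> \<delta> M1 M2 \<rho> \<longleftrightarrow> \<rho> > 0 \<and>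
     (\<forall>y. admissible \<Omega> \<alpha> \<delta> M1 M2 y \<longrightarrow>
       (\<forall>xb\<in>closure \<Omega>. inj_on y (ball xb \<rho> \<inter> \<Omega>) \<and>
          (\<forall>x1\<in>ball xb \<rho> \<inter> \<Omega>. \<forall>x2\<in>ball xb \<rho> \<inter> \<Omega>.
             (1/2) * (\<delta> / M1 ^ (CARD('n) - 1)) * dist x1 x2 \<le> dist (y x1) (y x2) \<and>
             dist (y x1) (y x2) \<le> M1 * sqrt (1 + L\<^sup>2) * dist x1 x2)))"

definition P_tilde :: "(real^'n) set \<Rightarrow> real \<Rightarrow> real \<Rightarrow> (real^'n \<Rightarrow> real^'n) \<Rightarrow> (real^'n) set" where
  "P_tilde \<Omega> \<rho> \<gamma> y = {x1 \<in> \<Omega>. \<exists>x2\<in>\<Omega>. infdist x2 (frontier \<Omega>) > \<gamma> \<and> y x1 = y x2 \<and>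
       dist x1 x2 > \<rho> / 2 + \<gamma>}"

definition P0 :: "(real^'n) set \<Rightarrow> real \<Rightarrow> (real^'n \<Rightarrow> real^'n) \<Rightarrow> (real^'n) set" where
  "P0 \<Omega> \<rho> z = {x \<in> \<Omega>. \<exists>xt\<in>\<Omega>. z x = z xt \<and> dist x xt > \<rho> / 2}"

end

theory Submission
  imports Defs
begin

text \<open>Put \<open>c = \<delta> / (2 M1^(d-1))\<close>, the lower Lipschitz constant of admissible maps on
  balls of radius \<open>\<rho>\<close>, and \<open>\<lambda> = c \<gamma> / 8\<close>. If \<open>x\<^sub>1 \<in> P_tilde\<close> is witnessed by \<open>x\<^sub>2\<close>,
  then \<open>B(x\<^sub>2, \<gamma>) \<subseteq> \<Omega>\<close>, and by invariance of domain the injective, \<open>c\<close>-expanding map \<open>z\<close>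
  covers \<open>B(z x\<^sub>2, c \<gamma> / 2)\<close> by \<open>z(B(x\<^sub>2, \<gamma> / 2))\<close>. Since \<open>y x\<^sub>1 = y x\<^sub>2\<close>, we have
  \<open>|z x\<^sub>1 - z x\<^sub>2| \<le> 2 \<lambda> < c \<gamma> / 2\<close>, so \<open>z x\<^sub>1 = z a\<close> for some \<open>a \<in> B(x\<^sub>2, \<gamma> / 2)\<close>,
  and \<open>|x\<^sub>1 - a| > \<rho> / 2 + \<gamma> - \<gamma> / 2 > \<rho> / 2\<close>.\<close>

lemma ball_subset_if_infdist_frontier_gt:
  fixes S :: "'a::real_normed_vector set"
  assumes "x \<in> S" and "r < infdist x (frontier S)"
  shows "ball x r \<subseteq> S"
proof (rule ccontr)
  assume "\<not> ball x r \<subseteq> S"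
  then have "0 < r" by (metis ball_eq_empty empty_subsetI not_less)
  with \<open>x \<in> S\<close> have "ball x r \<inter> S \<noteq> {}" by (metis IntI centre_in_ball empty_iff)
  moreover have "ball x r - S \<noteq> {}" using \<open>\<not> ball x r \<subseteq> S\<close> by blast
  ultimately obtain p where "p \<in> ball x r" "p \<in> frontier S"
    using connected_Int_frontier[OF connected_ball] by blast
  then have "infdist x (frontier S) < r"
    using infdist_le[of p "frontier S" x] by simp
  with assms(2) show False by simp
qed

lemma ball_subset_image_ball_if_expanding:
  fixes f :: "'a \<Rightarrow> 'a::euclidean_space"
  assumes cont: "continuous_on (cball x r) f" and "0 < c"
    and expanding: "\<And>a b. a \<in> cball x r \<Longrightarrow> b \<in> cball x r \<Longrightarrow> c * dist a b \<le> dist (f a) (f b)"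
  shows "ball (f x) (c * r) \<subseteq> f ` ball x r"
proof (cases "0 < r")
  case True
  let ?U = "f ` ball x r"
  have inj: "inj_on f (cball x r)"
    by (rule inj_onI) (use expanding[of _ _] \<open>0 < c\<close> in \<open>force simp: mult_le_0_iff\<close>)
  have "open ?U"
    using invariance_of_domain[OF continuous_on_subset[OF cont ball_subset_cball] open_ball
        inj_on_subset[OF inj ball_subset_cball]] .
  have "closure ?U \<subseteq> f ` cball x r"
    using compact_continuous_image[OF cont]
    by (simp add: closure_minimal compact_imp_closed image_mono)
  moreover have "cball x r = ball x r \<union> sphere x r"
    by auto
  ultimately have "frontier ?U \<subseteq> f ` sphere x r"
    using \<open>open ?U\<close> by (auto simp: frontier_def interior_open image_Un)
  moreover have "ball (f x) (c * r) \<inter> f ` sphere x r = {}"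
    using expanding[of x] True by fastforce
  ultimately have "ball (f x) (c * r) \<inter> frontier ?U = {}"
    by blast
  moreover have "f x \<in> ball (f x) (c * r) \<inter> ?U"
    using True \<open>0 < c\<close> by simp
  ultimately show ?thesis
    using connected_Int_frontier[OF connected_ball, of "f x" "c * r" ?U] by blast
next
  case False
  with \<open>0 < c\<close> have "c * r \<le> 0" by (simp add: mult_nonneg_nonpos)
  then show ?thesis by (simp add: ball_empty)
qed

lemma admissible_imp_continuous_on:
  "admissible \<Omega> \<alpha> \<delta> M1 M2 y \<Longrightarrow> continuous_on \<Omega> y"
  by (simp add: admissible_def C1_alpha_def differentiable_imp_continuous_on)

lemma injectivity_radius_expanding:
  fixes \<Omega> :: "(real^'n) set"
  assumes "injectivity_radius \<Omega> L \<alpha> \<delta> M1 M2 \<rho>" and "admissible \<Omega> \<alpha> \<delta> M1 M2 z"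
    and "xb \<in> closure \<Omega>" and "a \<in> ball xb \<rho> \<inter> \<Omega>" and "b \<in> ball xb \<rho> \<inter> \<Omega>"
  shows "\<delta> / (2 * M1 ^ (CARD('n) - 1)) * dist a b \<le> dist (z a) (z b)"
  using assms unfolding injectivity_radius_def by auto

lemma P_tilde_subset_P0:
  fixes \<Omega> :: "(real^'n) set"
  assumes radius: "injectivity_radius \<Omega> L \<alpha> \<delta> M1 M2 \<rho>" and "0 < \<delta>" and "0 < M1"
    and z: "admissible \<Omega> \<alpha> \<delta> M1 M2 z" and "0 < \<gamma>" and "\<gamma> < \<rho> / 2"
    and close: "\<forall>x\<in>\<Omega>. norm (y x - z x) \<le> \<delta> * \<gamma> / (16 * M1 ^ (CARD('n) - 1))"
  shows "P_tilde \<Omega> \<rho> \<gamma> y \<subseteq> P0 \<Omega> \<rho> z"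
proof
  define c where "c = \<delta> / (2 * M1 ^ (CARD('n) - 1))"
  have "0 < c" using \<open>0 < \<delta>\<close> \<open>0 < M1\<close> by (simp add: c_def)
  fix x1
  assume "x1 \<in> P_tilde \<Omega> \<rho> \<gamma> y"
  then obtain x2 where "x1 \<in> \<Omega>" "x2 \<in> \<Omega>" "\<gamma> < infdist x2 (frontier \<Omega>)"
    and "y x1 = y x2" and far: "\<rho> / 2 + \<gamma> < dist x1 x2"
    unfolding P_tilde_def by blast
  have "ball x2 \<gamma> \<subseteq> \<Omega>"
    by (rule ball_subset_if_infdist_frontier_gt) fact+
  then have small_ball: "cball x2 (\<gamma> / 2) \<subseteq> ball x2 \<rho> \<inter> \<Omega>"
    using \<open>0 < \<gamma>\<close> \<open>\<gamma> < \<rho> / 2\<close> by (auto simp: subset_eq)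
  have "ball (z x2) (c * (\<gamma> / 2)) \<subseteq> z ` ball x2 (\<gamma> / 2)"
  proof (rule ball_subset_image_ball_if_expanding[OF _ \<open>0 < c\<close>])
    show "continuous_on (cball x2 (\<gamma> / 2)) z"
      using small_ball admissible_imp_continuous_on[OF z] by (blast intro: continuous_on_subset)
    show "c * dist a b \<le> dist (z a) (z b)" if "a \<in> cball x2 (\<gamma> / 2)" "b \<in> cball x2 (\<gamma> / 2)" for a b
      using injectivity_radius_expanding[OF radius z closure_subset[THEN subsetD, OF \<open>x2 \<in> \<Omega>\<close>]]
        that small_ball unfolding c_def by blast
  qed
  moreover have "dist (z x2) (z x1) < c * (\<gamma> / 2)"
  proof -
    have "dist (z x2) (z x1) = norm ((y x1 - z x1) - (y x2 - z x2))"
      using \<open>y x1 = y x2\<close> by (simp add: dist_norm algebra_simps)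
    also have "\<dots> \<le> norm (y x1 - z x1) + norm (y x2 - z x2)"
      by (rule norm_triangle_ineq4)
    also have "\<dots> \<le> c * \<gamma> / 8 + c * \<gamma> / 8"
      using close \<open>x1 \<in> \<Omega>\<close> \<open>x2 \<in> \<Omega>\<close> unfolding c_def by (intro add_mono) auto
    also have "\<dots> < c * (\<gamma> / 2)"
      using \<open>0 < c\<close> \<open>0 < \<gamma>\<close> by simp
    finally show ?thesis .
  qed
  ultimately obtain a where a: "a \<in> ball x2 (\<gamma> / 2)" and "z x1 = z a"
    by auto
  have "a \<in> \<Omega>" using a small_ball by auto
  moreover have "\<rho> / 2 < dist x1 a"
    using a far dist_triangle[of x1 x2 a] \<open>0 < \<gamma>\<close> by (simp add: dist_commute)
  ultimately show "x1 \<in> P0 \<Omega> \<rho> z"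
    unfolding P0_def using \<open>x1 \<in> \<Omega>\<close> \<open>z x1 = z a\<close> by blast
qed

theorem proposition3p10:
  fixes \<Omega> :: "(real^'n) set" and L \<alpha> \<delta> M1 M2 \<rho> \<gamma> :: real
  assumes "lipschitz_domain \<Omega> L"
    and "0 < \<alpha>" and "\<alpha> \<le> 1" and "0 < \<delta>" and "0 < M1" and "0 < M2"
    and "injectivity_radius \<Omega> L \<alpha> \<delta> M1 M2 \<rho>"
    and "0 < \<gamma>" and "\<gamma> < \<rho> / 2"
  shows "\<exists>lam>0. \<forall>y z. admissible \<Omega> \<alpha> \<delta> M1 M2 y \<longrightarrow> admissible \<Omega> \<alpha> \<delta> M1 M2 z \<longrightarrow>
           (\<forall>x\<in>\<Omega>. norm (y x - z x) \<le> lam) \<longrightarrow> P_tilde \<Omega> \<rho> \<gamma> y \<subseteq> P0 \<Omega> \<rho> z"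
proof (intro exI conjI allI impI)
  show "0 < \<delta> * \<gamma> / (16 * M1 ^ (CARD('n) - 1))"
    using assms by simp
  show "P_tilde \<Omega> \<rho> \<gamma> y \<subseteq> P0 \<Omega> \<rho> z"
    if "admissible \<Omega> \<alpha> \<delta> M1 M2 z"
      and "\<forall>x\<in>\<Omega>. norm (y x - z x) \<le> \<delta> * \<gamma> / (16 * M1 ^ (CARD('n) - 1))" for y z
    using P_tilde_subset_P0[OF assms(7) assms(4,5) that(1) assms(8,9) that(2)] .
qed

end
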